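(* With notation as in the context, let $\mathcal A_y$ be the $*$-subalgebra of $\mathcal A$ generated by $C_K(X)$ and $C_{c,K}(X\setminus\{y\})\,t$. Then $\mathcal A_\infty=\mathcal A_y$.
   Context: Let $X$ be an infinite, totally disconnected, compact metrizable space, $T$ a homeomorphism, $K$ a field with involution, $C_K(X)$ the $*$-algebra of locally constant functions $X\to K$, $\mathcal A=C_K(X)\rtimes_T\mathbb Z$ the algebraic crossed product (finite sums $\sum f_it^i$, $tf=(f\circ T^{-1})t$, $(ft^i)^*=t^{-i}f^*$). For an open $U\subseteq X$, $C_{c,K}(U)$ is the ideal of $C_K(X)$ generated (equivalently, spanned) by the $\chi_V$ with $V\subseteq U$ clopen. Fix $y\in X$, a decreasing sequence of clopen sets $E_n$ with $\bigcap_nE_n=\{y\}$, and partitions $\mathcal P_n$ of $X\setminus E_n$ (finite families of nonempty pairwise disjoint clopen sets with union $X\setminus E_n$) such that each member of $\mathcal P_{n+1}\cup\{E_{n+1}\}$ lies in a member of $\mathcal P_n\cup\{E_n\}$ and $\bigcup_n(\mathcal P_n\cup\{E_n\})$ generates the topology of $X$. $\mathcal A_n$ is the unital $*$-subalgebra of $\mathcal A$ generated by $\{\chi_Zt:Z\in\mathcal P_n\}$ and $\mathcal A_\infty=\bigcup_n\mathcal A_n$. *)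

theory Defs
  imports "HOL-Analysis.Analysis"
begin

definition totally_disconnected_space :: "'a::topological_space itself \<Rightarrow> bool" where
  "totally_disconnected_space _ \<longleftrightarrow> (\<forall>S::'a set. connected S \<longrightarrow> (\<exists>a. S \<subseteq> {a}))"

definition clopen_set :: "'a::topological_space set \<Rightarrow> bool" where
  "clopen_set V \<longleftrightarrow> open V \<and> closed V"

definition loc_const :: "('a::topological_space \<Rightarrow> 'k) \<Rightarrow> bool" where
  "loc_const f \<longleftrightarrow> (\<forall>x. \<exists>U. open U \<and> x \<in> U \<and> (\<forall>z\<in>U. f z = f x))"

definition chi :: "'a set \<Rightarrow> 'a \<Rightarrow> 'k::field" where
  "chi V = (\<lambda>x. if x \<in> V then 1 else 0)"

definition CcK :: "'a::topological_space set \<Rightarrow> ('a \<Rightarrow> 'k::field) set" where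
  "CcK U = {f. \<exists>(n::nat) (c::nat \<Rightarrow> 'k) (V::nat \<Rightarrow> 'a set).
              (\<forall>i<n. clopen_set (V i) \<and> V i \<subseteq> U) \<and>
              f = (\<lambda>x. \<Sum>i<n. c i * chi (V i) x)}"

definition Tpow :: "('a \<Rightarrow> 'a) \<Rightarrow> int \<Rightarrow> 'a \<Rightarrow> 'a" where
  "Tpow T i = (if 0 \<le> i then T ^^ nat i else (inv T) ^^ nat (- i))"

text \<open>The algebraic crossed product C_K(X) x_T Z: an element sum_i f_i t^i is
  represented by the finitely supported coefficient map i |-> f_i.\<close>
definition CP :: "(int \<Rightarrow> 'a::topological_space \<Rightarrow> 'k::field) set" where
  "CP = {a. finite {i. a i \<noteq> (\<lambda>_. 0)} \<and> (\<forall>i. loc_const (a i))}"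

definition cp_mono :: "int \<Rightarrow> ('a \<Rightarrow> 'k::field) \<Rightarrow> int \<Rightarrow> 'a \<Rightarrow> 'k" where
  "cp_mono i f = (\<lambda>k. if k = i then f else (\<lambda>_. 0))"

definition cp_one :: "int \<Rightarrow> 'a \<Rightarrow> 'k::field" where
  "cp_one = cp_mono 0 (\<lambda>_. 1)"

text \<open>Product determined by (f t^i)(g t^j) = f (g o T^{-i}) t^{i+j}.\<close>
definition cp_mult :: "('a \<Rightarrow> 'a) \<Rightarrow> (int \<Rightarrow> 'a \<Rightarrow> 'k::field) \<Rightarrow> (int \<Rightarrow> 'a \<Rightarrow> 'k) \<Rightarrow> int \<Rightarrow> 'a \<Rightarrow> 'k" where
  "cp_mult T a b = (\<lambda>k x. \<Sum>i\<in>{i. a i \<noteq> (\<lambda>_. 0)}. a i x * b (k - i) (Tpow T (- i) x))"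

text \<open>Involution determined by (f t^i)^* = t^{-i} f^* = (f^* o T^i) t^{-i}.\<close>
definition cp_star :: "('a \<Rightarrow> 'a) \<Rightarrow> ('k \<Rightarrow> 'k) \<Rightarrow> (int \<Rightarrow> 'a \<Rightarrow> 'k::field) \<Rightarrow> int \<Rightarrow> 'a \<Rightarrow> 'k" where
  "cp_star T cj a = (\<lambda>k x. cj (a (- k) (Tpow T (- k) x)))"

definition cp_smult :: "'k \<Rightarrow> (int \<Rightarrow> 'a \<Rightarrow> 'k::field) \<Rightarrow> int \<Rightarrow> 'a \<Rightarrow> 'k" where
  "cp_smult c a = (\<lambda>k x. c * a k x)"

definition star_subalg :: "('a::topological_space \<Rightarrow> 'a) \<Rightarrow> ('k \<Rightarrow> 'k) \<Rightarrow> (int \<Rightarrow> 'a \<Rightarrow> 'k::field) set \<Rightarrow> bool" where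
  "star_subalg T cj B \<longleftrightarrow> B \<subseteq> CP \<and> (\<lambda>_ _. 0) \<in> B \<and>
     (\<forall>a\<in>B. \<forall>b\<in>B. (\<lambda>k x. a k x + b k x) \<in> B) \<and>
     (\<forall>c. \<forall>a\<in>B. cp_smult c a \<in> B) \<and>
     (\<forall>a\<in>B. \<forall>b\<in>B. cp_mult T a b \<in> B) \<and>
     (\<forall>a\<in>B. cp_star T cj a \<in> B)"

definition gen_star_subalg :: "('a::topological_space \<Rightarrow> 'a) \<Rightarrow> ('k \<Rightarrow> 'k) \<Rightarrow> (int \<Rightarrow> 'a \<Rightarrow> 'k::field) set \<Rightarrow> (int \<Rightarrow> 'a \<Rightarrow> 'k) set" where
  "gen_star_subalg T cj S = \<Inter>{B. star_subalg T cj B \<and> S \<subseteq> B}"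

definition gen_unital_star_subalg :: "('a::topological_space \<Rightarrow> 'a) \<Rightarrow> ('k \<Rightarrow> 'k) \<Rightarrow> (int \<Rightarrow> 'a \<Rightarrow> 'k::field) set \<Rightarrow> (int \<Rightarrow> 'a \<Rightarrow> 'k) set" where
  "gen_unital_star_subalg T cj S = gen_star_subalg T cj (insert cp_one S)"

end

theory Submission
  imports Defs
begin

text \<open>Both sides are *-subalgebras of the crossed product, so it suffices to put the generators
  of each into the other. The cells of \<open>P n\<close> avoid \<open>y\<close>, so \<open>A n \<subseteq> A\<^sub>y\<close>. Conversely, the \<open>A n\<close>
  increase, because a cell of \<open>P m\<close> is a union of cells of \<open>P n\<close> for \<open>m \<le> n\<close>, so their union is
  a *-subalgebra. By compactness a clopen \<open>V\<close> with \<open>y \<notin> V\<close> is a finite disjoint union of cells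
  of some \<open>P n\<close>, hence \<open>\<chi>\<^sub>V t \<in> A n\<close> and \<open>\<chi>\<^sub>V = (\<chi>\<^sub>V t)(\<chi>\<^sub>V t)\<^sup>*\<close>; if \<open>y \<in> V\<close> then
  \<open>\<chi>\<^sub>V = 1 - \<chi>\<^bsub>-V\<^esub>\<close>. Finally, a locally constant function on the compact space \<open>X\<close> has finite
  range, so it is a linear combination of characteristic functions of its clopen fibres.\<close>

section \<open>Locally constant functions\<close>

lemma loc_const_open_vimage:
  assumes "loc_const f" shows "open (f -` S)"
proof (subst open_subopen, intro ballI)
  fix x assume "x \<in> f -` S"
  then obtain U where "open U" "x \<in> U" "U \<subseteq> f -` S"
    using assms unfolding loc_const_def by (metis subsetI vimageE vimageI)
  then show "\<exists>U. open U \<and> x \<in> U \<and> U \<subseteq> f -` S" by blast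
qed

lemma loc_const_clopen_fibre: "loc_const f \<Longrightarrow> clopen_set (f -` {v})"
  unfolding clopen_set_def closed_def
  by (metis loc_const_open_vimage vimage_Compl)

lemma loc_const_const: "loc_const (\<lambda>x. c)"
  unfolding loc_const_def by auto

lemma loc_const_compose: "loc_const f \<Longrightarrow> loc_const (\<lambda>x. g (f x))"
  unfolding loc_const_def by (metis (no_types, lifting))

lemma loc_const_compose_continuous:
  assumes "loc_const f" "continuous_on UNIV h" shows "loc_const (\<lambda>x. f (h x))"
  unfolding loc_const_def
proof
  fix x
  obtain U where U: "open U" "h x \<in> U" "\<forall>z\<in>U. f z = f (h x)"
    using assms(1) unfolding loc_const_def by blast
  have "open (h -` U)" "x \<in> h -` U" "\<forall>z\<in>h -` U. f (h z) = f (h x)"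
    using open_vimage[OF U(1) assms(2)] U(2,3) by blast+
  then show "\<exists>V. open V \<and> x \<in> V \<and> (\<forall>z\<in>V. f (h z) = f (h x))" by blast
qed

lemma loc_const_binop:
  assumes "loc_const f" "loc_const g" shows "loc_const (\<lambda>x. F (f x) (g x))"
  unfolding loc_const_def
proof
  fix x
  obtain U where U: "open U" "x \<in> U" "\<forall>z\<in>U. f z = f x"
    using assms(1) unfolding loc_const_def by blast
  obtain V where V: "open V" "x \<in> V" "\<forall>z\<in>V. g z = g x"
    using assms(2) unfolding loc_const_def by blast
  have "\<forall>z\<in>U \<inter> V. F (f z) (g z) = F (f x) (g x)"
    using U(3) V(3) by (metis IntD1 IntD2)
  then show "\<exists>W. open W \<and> x \<in> W \<and> (\<forall>z\<in>W. F (f z) (g z) = F (f x) (g x))"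
    using U(1,2) V(1,2) open_Int by blast
qed

lemma loc_const_sum:
  assumes "\<And>i. i \<in> A \<Longrightarrow> loc_const (f i)"
  shows "loc_const (\<lambda>x. \<Sum>i\<in>A. f i x :: 'b::comm_monoid_add)"
proof (cases "finite A")
  case True
  then show ?thesis using assms
  proof (induction A rule: finite_induct)
    case (insert a A)
    then show ?case using loc_const_binop[of "f a" "\<lambda>x. \<Sum>i\<in>A. f i x" "(+)"] by simp
  qed (simp add: loc_const_const)
qed (simp add: loc_const_const)

lemma loc_const_chi:
  assumes "clopen_set V" shows "loc_const (chi V)"
  unfolding loc_const_def
proof
  fix x
  have "open V" "open (- V)" using assms by (simp_all add: clopen_set_def open_Compl)
  then show "\<exists>U. open U \<and> x \<in> U \<and> (\<forall>z\<in>U. chi V z = chi V x)"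
    by (cases "x \<in> V") (auto simp: chi_def)
qed

lemma loc_const_CcK: "f \<in> CcK U \<Longrightarrow> loc_const f"
proof -
  assume "f \<in> CcK U"
  then obtain n :: nat and c V where "\<forall>i<n. clopen_set (V i) \<and> V i \<subseteq> U"
    and "f = (\<lambda>x. \<Sum>i<n. c i * chi (V i) x)" unfolding CcK_def mem_Collect_eq by blast
  then show ?thesis
    by (auto intro!: loc_const_sum loc_const_compose[OF loc_const_chi])
qed

lemma loc_const_finite_range:
  assumes "compact (UNIV :: 'a::topological_space set)" "loc_const (f :: 'a \<Rightarrow> 'b)"
  shows "finite (range f)"
proof -
  obtain \<F> where \<F>: "\<F> \<subseteq> (\<lambda>v. f -` {v}) ` UNIV" "finite \<F>" "UNIV \<subseteq> \<Union>\<F>"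
    using compactE[OF assms(1), of "(\<lambda>v. f -` {v}) ` UNIV"] loc_const_open_vimage[OF assms(2)]
    by blast
  have "range f \<subseteq> (\<lambda>V. f (SOME x. x \<in> V)) ` \<F>"
  proof
    fix v assume "v \<in> range f"
    then obtain x where "v = f x" by blast
    moreover obtain V where "V \<in> \<F>" "x \<in> V" using \<F>(3) by blast
    moreover have "f (SOME x. x \<in> V) = f x"
      using \<open>V \<in> \<F>\<close> \<open>x \<in> V\<close> \<F>(1) someI[of "\<lambda>z. z \<in> V"] by blast
    ultimately show "v \<in> (\<lambda>V. f (SOME x. x \<in> V)) ` \<F>" by (metis image_eqI)
  qed
  then show ?thesis using \<F>(2) finite_surj by blast
qed

lemma sum_chi_fibres:
  assumes "finite (range f)"
  shows "f = (\<lambda>x. \<Sum>v\<in>range f. v * chi (f -` {v}) x :: 'k::field)"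
proof
  fix x
  have "(\<Sum>v\<in>range f. v * chi (f -` {v}) x) = (\<Sum>v\<in>range f. if v = f x then v else 0)"
    by (intro sum.cong) (auto simp: chi_def)
  then show "f x = (\<Sum>v\<in>range f. v * chi (f -` {v}) x)" using assms by simp
qed

lemma chi_disjoint_Union:
  assumes "finite \<F>" "disjoint \<F>"
  shows "chi (\<Union>\<F>) = (\<lambda>x. \<Sum>D\<in>\<F>. chi D x :: 'k::field)"
proof
  fix x
  show "chi (\<Union>\<F>) x = (\<Sum>D\<in>\<F>. chi D x :: 'k)"
  proof (cases "x \<in> \<Union>\<F>")
    case True
    then obtain D0 where "D0 \<in> \<F>" "x \<in> D0" by blast
    then have "(\<Sum>D\<in>\<F>. chi D x :: 'k) = (\<Sum>D\<in>\<F>. if D = D0 then 1 else 0)"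
      using assms(2) by (intro sum.cong) (auto simp: chi_def disjoint_def)
    then show ?thesis using True assms(1) \<open>D0 \<in> \<F>\<close> by (simp add: chi_def)
  qed (auto simp: chi_def intro!: sum.neutral[symmetric])
qed

lemma chi_in_CcK:
  assumes "clopen_set V" "V \<subseteq> U" shows "chi V \<in> CcK U"
  unfolding CcK_def
  using assms by (intro CollectI exI[of _ "1::nat"] exI[of _ "\<lambda>_. 1"] exI[of _ "\<lambda>_. V"]) auto

section \<open>The crossed product\<close>

lemma cp_mono_add: "(\<lambda>k x. cp_mono i f k x + cp_mono i g k x) = cp_mono i (\<lambda>x. f x + g x)"
  by (auto simp: cp_mono_def fun_eq_iff)

lemma cp_smult_cp_mono: "cp_smult c (cp_mono i f) = cp_mono i (\<lambda>x. c * f x)"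
  by (auto simp: cp_mono_def cp_smult_def fun_eq_iff)

lemma cp_mono_zero: "cp_mono i (\<lambda>x. 0) = (\<lambda>_ _. 0)"
  by (auto simp: cp_mono_def fun_eq_iff)

lemma cp_mult_cp_mono:
  "cp_mult T (cp_mono i f) (cp_mono j g) = cp_mono (i + j) (\<lambda>x. f x * g (Tpow T (- i) x))"
proof (cases "f = (\<lambda>_. 0)")
  case True
  then have "{k. cp_mono i f k \<noteq> (\<lambda>_. 0)} = {}" by (auto simp: cp_mono_def)
  then show ?thesis using True by (auto simp: cp_mult_def cp_mono_def fun_eq_iff)
next
  case False
  then have "{k. cp_mono i f k \<noteq> (\<lambda>_. 0)} = {i}" by (auto simp: cp_mono_def)
  then show ?thesis by (auto simp: cp_mult_def cp_mono_def fun_eq_iff)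
qed

lemma cp_star_cp_mono:
  "cj 0 = 0 \<Longrightarrow> cp_star T cj (cp_mono i f) = cp_mono (- i) (\<lambda>x. cj (f (Tpow T i x)))"
  by (auto simp: cp_star_def cp_mono_def fun_eq_iff)

lemma cp_mono_in_CP: "loc_const f \<Longrightarrow> cp_mono i f \<in> CP"
proof -
  assume "loc_const f"
  have "{k. cp_mono i f k \<noteq> (\<lambda>_. 0)} \<subseteq> {i}" by (auto simp: cp_mono_def)
  then show ?thesis
    using \<open>loc_const f\<close> finite_subset by (auto simp: CP_def cp_mono_def loc_const_const)
qed

lemma continuous_on_Tpow:
  assumes "continuous_on UNIV T" "continuous_on UNIV (inv T)"
  shows "continuous_on UNIV (Tpow T i)"
proof -
  have "continuous_on UNIV (f ^^ n)" if "continuous_on UNIV f" for f :: "'a \<Rightarrow> 'a" and n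
    by (induction n) (auto intro: continuous_on_compose2[OF that] simp: continuous_on_id)
  then show ?thesis using assms by (simp add: Tpow_def)
qed

lemma CP_add: "a \<in> CP \<Longrightarrow> b \<in> CP \<Longrightarrow> (\<lambda>k x. a k x + b k x) \<in> CP"
proof -
  assume "a \<in> CP" "b \<in> CP"
  then have "finite ({i. a i \<noteq> (\<lambda>_. 0)} \<union> {i. b i \<noteq> (\<lambda>_. 0)})" "\<And>i. loc_const (a i)"
    "\<And>i. loc_const (b i)" by (auto simp: CP_def)
  moreover have "{k. (\<lambda>x. a k x + b k x) \<noteq> (\<lambda>_. 0)} \<subseteq> {i. a i \<noteq> (\<lambda>_. 0)} \<union> {i. b i \<noteq> (\<lambda>_. 0)}"
    by (auto simp: fun_eq_iff)
  ultimately show ?thesis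
    unfolding CP_def by (auto intro: finite_subset loc_const_binop[of "a _" "b _" "(+)"])
qed

lemma CP_smult: "a \<in> CP \<Longrightarrow> cp_smult c a \<in> CP"
proof -
  assume "a \<in> CP"
  moreover have "{k. cp_smult c a k \<noteq> (\<lambda>_. 0)} \<subseteq> {i. a i \<noteq> (\<lambda>_. 0)}"
    by (auto simp: cp_smult_def)
  ultimately show ?thesis
    unfolding CP_def cp_smult_def by (auto intro: finite_subset loc_const_compose)
qed

lemma CP_mult:
  assumes "\<And>i. continuous_on UNIV (Tpow T i)" "a \<in> CP" "b \<in> CP"
  shows "cp_mult T a b \<in> CP"
proof -
  let ?Sa = "{i. a i \<noteq> (\<lambda>_. 0)}" and ?Sb = "{i. b i \<noteq> (\<lambda>_. 0)}"
  have fin: "finite ?Sa" "finite ?Sb" and lc: "\<And>i. loc_const (a i)" "\<And>i. loc_const (b i)"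
    using assms(2,3) by (auto simp: CP_def)
  have "{k. cp_mult T a b k \<noteq> (\<lambda>_. 0)} \<subseteq> (\<lambda>(i, j). i + j) ` (?Sa \<times> ?Sb)"
  proof
    fix k assume "k \<in> {k. cp_mult T a b k \<noteq> (\<lambda>_. 0)}"
    then obtain x where "(\<Sum>i\<in>?Sa. a i x * b (k - i) (Tpow T (- i) x)) \<noteq> 0"
      by (auto simp: cp_mult_def)
    then obtain i where "i \<in> ?Sa" "a i x * b (k - i) (Tpow T (- i) x) \<noteq> 0"
      by (rule sum.not_neutral_contains_not_neutral)
    then have "(i, k - i) \<in> ?Sa \<times> ?Sb" by (metis (mono_tags) SigmaI mem_Collect_eq mult_zero_right)
    then show "k \<in> (\<lambda>(i, j). i + j) ` (?Sa \<times> ?Sb)" by (rule rev_image_eqI) simp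
  qed
  then have "finite {k. cp_mult T a b k \<noteq> (\<lambda>_. 0)}"
    using fin by (auto intro: finite_subset)
  moreover have "loc_const (cp_mult T a b k)" for k
  proof -
    have "loc_const (\<lambda>x. a i x * b (k - i) (Tpow T (- i) x))" for i
      using loc_const_binop[OF lc(1) loc_const_compose_continuous[OF lc(2) assms(1)]] .
    then show ?thesis unfolding cp_mult_def by (rule loc_const_sum)
  qed
  ultimately show ?thesis by (simp add: CP_def)
qed

lemma CP_star:
  assumes "\<And>i. continuous_on UNIV (Tpow T i)" "cj 0 = 0" "a \<in> CP"
  shows "cp_star T cj a \<in> CP"
proof -
  have fin: "finite {i. a i \<noteq> (\<lambda>_. 0)}" and lc: "\<And>i. loc_const (a i)"
    using assms(3) by (auto simp: CP_def)
  have "{k. cp_star T cj a k \<noteq> (\<lambda>_. 0)} \<subseteq> uminus ` {i. a i \<noteq> (\<lambda>_. 0)}"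
  proof
    fix k assume "k \<in> {k. cp_star T cj a k \<noteq> (\<lambda>_. 0)}"
    then have "- k \<in> {i. a i \<noteq> (\<lambda>_. 0)}" using assms(2) by (auto simp: cp_star_def)
    then show "k \<in> uminus ` {i. a i \<noteq> (\<lambda>_. 0)}" by (rule rev_image_eqI) simp
  qed
  then have "finite {k. cp_star T cj a k \<noteq> (\<lambda>_. 0)}"
    using fin by (auto intro: finite_subset)
  moreover have "loc_const (cp_star T cj a k)" for k
    unfolding cp_star_def
    using loc_const_compose[OF loc_const_compose_continuous[OF lc assms(1)]] .
  ultimately show ?thesis by (simp add: CP_def)
qed

lemma star_subalg_CP:
  assumes "continuous_on UNIV T" "continuous_on UNIV (inv T)" "cj 0 = 0"
  shows "star_subalg T cj CP"
proof -
  have Tpow: "\<And>i. continuous_on UNIV (Tpow T i)"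
    by (rule continuous_on_Tpow[OF assms(1,2)])
  have "(\<lambda>_ _. 0) \<in> CP"
    using cp_mono_in_CP[OF loc_const_const[of 0]] by (simp add: cp_mono_zero)
  then show ?thesis
    unfolding star_subalg_def
    by (intro conjI ballI allI subset_refl CP_add CP_smult CP_mult[where T = T, OF Tpow]
        CP_star[where T = T and cj = cj, OF Tpow assms(3)])
qed

lemma star_subalgD:
  assumes "star_subalg T cj B"
  shows "B \<subseteq> CP" "(\<lambda>_ _. 0) \<in> B"
    "\<And>a b. a \<in> B \<Longrightarrow> b \<in> B \<Longrightarrow> (\<lambda>k x. a k x + b k x) \<in> B"
    "\<And>a c. a \<in> B \<Longrightarrow> cp_smult c a \<in> B"
    "\<And>a b. a \<in> B \<Longrightarrow> b \<in> B \<Longrightarrow> cp_mult T a b \<in> B"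
    "\<And>a. a \<in> B \<Longrightarrow> cp_star T cj a \<in> B"
  using assms unfolding star_subalg_def by blast+

lemma gen_star_subalg_least: "star_subalg T cj B \<Longrightarrow> S \<subseteq> B \<Longrightarrow> gen_star_subalg T cj S \<subseteq> B"
  unfolding gen_star_subalg_def by blast

lemma gen_star_subalg_superset: "S \<subseteq> gen_star_subalg T cj S"
  unfolding gen_star_subalg_def by blast

lemma star_subalgI:
  assumes "B \<subseteq> CP" "(\<lambda>_ _. 0) \<in> B"
    "\<And>a b. a \<in> B \<Longrightarrow> b \<in> B \<Longrightarrow> (\<lambda>k x. a k x + b k x) \<in> B"
    "\<And>a c. a \<in> B \<Longrightarrow> cp_smult c a \<in> B"
    "\<And>a b. a \<in> B \<Longrightarrow> b \<in> B \<Longrightarrow> cp_mult T a b \<in> B"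
    "\<And>a. a \<in> B \<Longrightarrow> cp_star T cj a \<in> B"
  shows "star_subalg T cj B"
  unfolding star_subalg_def using assms by simp

lemma star_subalg_Inter:
  assumes "\<B> \<noteq> {}" "\<And>B. B \<in> \<B> \<Longrightarrow> star_subalg T cj B"
  shows "star_subalg T cj (\<Inter>\<B>)"
proof (rule star_subalgI)
  note closed = star_subalgD[OF assms(2)]
  show "\<Inter>\<B> \<subseteq> CP" using assms(1) closed(1) by blast
  show "(\<lambda>_ _. 0) \<in> \<Inter>\<B>" using closed(2) by blast
  fix a b c assume "a \<in> \<Inter>\<B>" "b \<in> \<Inter>\<B>"
  then show "(\<lambda>k x. a k x + b k x) \<in> \<Inter>\<B>" "cp_smult c a \<in> \<Inter>\<B>" "cp_mult T a b \<in> \<Inter>\<B>"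
    "cp_star T cj a \<in> \<Inter>\<B>"
    using closed(3-6) by (meson InterD InterI)+
qed

lemma star_subalg_gen_star_subalg:
  "star_subalg T cj CP \<Longrightarrow> S \<subseteq> CP \<Longrightarrow> star_subalg T cj (gen_star_subalg T cj S)"
  unfolding gen_star_subalg_def by (rule star_subalg_Inter) blast+

lemma star_subalg_UN_incseq:
  assumes "incseq A" "\<And>n. star_subalg T cj (A n)"
  shows "star_subalg T cj (\<Union>n. A n)"
proof (rule star_subalgI)
  note closed = star_subalgD[OF assms(2)]
  show "(\<Union>n. A n) \<subseteq> CP" using closed(1) by (rule UN_least)
  show "(\<lambda>_ _. 0) \<in> (\<Union>n. A n)" using closed(2) by (rule UN_I[OF UNIV_I])
  fix a b c assume a: "a \<in> (\<Union>n. A n)" and b: "b \<in> (\<Union>n. A n)"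
  then obtain m m' where "a \<in> A m" "b \<in> A m'" by blast
  then have "a \<in> A (max m m')" "b \<in> A (max m m')"
    using incseqD[OF assms(1), of m "max m m'"] incseqD[OF assms(1), of m' "max m m'"] by auto
  then have "(\<lambda>k x. a k x + b k x) \<in> A (max m m')" "cp_smult c a \<in> A (max m m')"
    "cp_mult T a b \<in> A (max m m')" "cp_star T cj a \<in> A (max m m')"
    using closed(3-6) by simp_all
  then show "(\<lambda>k x. a k x + b k x) \<in> (\<Union>n. A n)" "cp_smult c a \<in> (\<Union>n. A n)"
    "cp_mult T a b \<in> (\<Union>n. A n)" "cp_star T cj a \<in> (\<Union>n. A n)"
    by blast+
qed

lemma star_subalg_cp_mono_sum:
  assumes "star_subalg T cj B" "finite F" "\<And>v. v \<in> F \<Longrightarrow> cp_mono i (g v) \<in> B"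
  shows "cp_mono i (\<lambda>x. \<Sum>v\<in>F. g v x) \<in> B"
  using assms(2,3)
proof (induction F rule: finite_induct)
  case empty
  then show ?case using star_subalgD(2)[OF assms(1)] by (simp add: cp_mono_zero)
next
  case (insert v F)
  then have "(\<lambda>k x. cp_mono i (g v) k x + cp_mono i (\<lambda>x. \<Sum>v\<in>F. g v x) k x) \<in> B"
    using star_subalgD(3)[OF assms(1)] by simp
  then show ?case using insert(1,2) by (simp add: cp_mono_add)
qed

lemma star_subalg_cp_mono_chi_Union:
  assumes "star_subalg T cj B" "finite \<F>" "disjoint \<F>" "\<And>Z. Z \<in> \<F> \<Longrightarrow> cp_mono i (chi Z) \<in> B"
  shows "cp_mono i (chi (\<Union>\<F>)) \<in> B"
  unfolding chi_disjoint_Union[OF assms(2,3)]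
  using star_subalg_cp_mono_sum[OF assms(1,2)] assms(4) by blast

text \<open>\<open>\<chi>\<^sub>Z = (\<chi>\<^sub>Z t)(\<chi>\<^sub>Z t)\<^sup>*\<close>, since \<open>\<chi>\<^sub>Z\<close> is a self-adjoint idempotent and \<open>t\<close> is unitary.\<close>
lemma cp_mono_chi_eq_mult_star:
  assumes "surj T" "cj 0 = 0" "cj 1 = 1"
  shows "cp_mono 0 (chi Z) = cp_mult T (cp_mono 1 (chi Z)) (cp_star T cj (cp_mono 1 (chi Z)))"
proof -
  have "(\<lambda>x. chi Z x * cj (chi Z (Tpow T 1 (Tpow T (- 1) x)))) = chi Z"
    using assms by (auto simp: fun_eq_iff chi_def Tpow_def surj_f_inv_f)
  then show ?thesis using assms(2) by (simp add: cp_star_cp_mono cp_mult_cp_mono)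
qed

lemma star_subalg_cp_mono_0_chi:
  assumes "star_subalg T cj B" "cp_mono 1 (chi Z) \<in> B" "surj T" "cj 0 = 0" "cj 1 = 1"
  shows "cp_mono 0 (chi Z) \<in> B"
  unfolding cp_mono_chi_eq_mult_star[OF assms(3-5)]
  using star_subalgD(5,6)[OF assms(1)] assms(2) by blast

section \<open>A refining sequence of clopen partitions\<close>

locale nested_partitions =
  fixes y :: "'a::topological_space" and E :: "nat \<Rightarrow> 'a set" and P :: "nat \<Rightarrow> 'a set set"
  assumes compact_UNIV: "compact (UNIV :: 'a set)"
    and E_clopen: "\<And>n. clopen_set (E n)"
    and y_in_E: "\<And>n. y \<in> E n"
    and P_finite: "\<And>n. finite (P n)"
    and P_clopen: "\<And>n Z. Z \<in> P n \<Longrightarrow> clopen_set Z"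
    and P_disjoint: "\<And>n Z W. Z \<in> P n \<Longrightarrow> W \<in> P n \<Longrightarrow> Z \<noteq> W \<Longrightarrow> Z \<inter> W = {}"
    and P_union: "\<And>n. \<Union>(P n) = UNIV - E n"
    and P_refine: "\<And>n Z. Z \<in> insert (E (Suc n)) (P (Suc n)) \<Longrightarrow> \<exists>W \<in> insert (E n) (P n). Z \<subseteq> W"
    and P_generates: "\<And>U. open U \<longleftrightarrow> generate_topology (\<Union>n. insert (E n) (P n)) U"
begin

definition cells :: "nat \<Rightarrow> 'a set set" where
  "cells n = insert (E n) (P n)"

lemma cells_clopen: "C \<in> cells n \<Longrightarrow> clopen_set C"
  unfolding cells_def using E_clopen P_clopen by blast

lemma y_notin_P: "Z \<in> P n \<Longrightarrow> y \<notin> Z"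
  using P_union[of n] y_in_E[of n] by blast

lemma disjoint_P: "disjoint (P n)"
  using P_disjoint by (auto simp: pairwise_def disjnt_def)

lemma disjoint_cells: "C \<in> cells n \<Longrightarrow> C' \<in> cells n \<Longrightarrow> C \<noteq> C' \<Longrightarrow> C \<inter> C' = {}"
  unfolding cells_def using P_disjoint P_union[of n] by blast

lemma cells_cover: "\<exists>C\<in>cells n. x \<in> C"
  using P_union[of n] unfolding cells_def by blast

lemma cells_refine:
  assumes "m \<le> n" "D \<in> cells n" shows "\<exists>W\<in>cells m. D \<subseteq> W"
  using assms
proof (induction n arbitrary: D rule: dec_induct)
  case (step n)
  obtain W where "W \<in> cells n" "D \<subseteq> W"
    using P_refine step.prems unfolding cells_def by blast
  then show ?case using step.IH by (meson subset_trans)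
qed blast

lemma cells_nested:
  assumes "m \<le> n" "D \<in> cells n" "W \<in> cells m" "D \<inter> W \<noteq> {}"
  shows "D \<subseteq> W"
proof -
  obtain W' where "W' \<in> cells m" "D \<subseteq> W'" using cells_refine[OF assms(1,2)] by blast
  moreover from this have "W' = W" using disjoint_cells assms(3,4) by blast
  ultimately show ?thesis by blast
qed

lemma open_cell_nbhd:
  assumes "open U" "x \<in> U" shows "\<exists>m. \<exists>C\<in>cells m. x \<in> C \<and> C \<subseteq> U"
proof -
  have "generate_topology (\<Union>n. cells n) U" using assms(1) P_generates unfolding cells_def by blast
  then show ?thesis using assms(2)
  proof (induction arbitrary: x rule: generate_topology.induct)
    case UNIV
    then show ?case using cells_cover by blast
  next
    case (Int U V)
    obtain m C where C: "C \<in> cells m" "x \<in> C" "C \<subseteq> U" using Int.IH(1) Int.prems by blast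
    obtain m' C' where C': "C' \<in> cells m'" "x \<in> C'" "C' \<subseteq> V" using Int.IH(2) Int.prems by blast
    show ?case
    proof (cases "m \<le> m'")
      case True
      then have "C' \<subseteq> C" using cells_nested C C' by blast
      then show ?thesis using C' C by blast
    next
      case False
      then have "C \<subseteq> C'" using cells_nested[of m' m C C'] C C' by auto
      then show ?thesis using C' C by blast
    qed
  next
    case (UN K)
    then show ?case by (meson UnionE Union_upper subset_trans)
  qed blast
qed

text \<open>This is where compactness enters: a clopen set is covered by finitely many cells.\<close>
lemma clopen_eventually_saturated:
  assumes "clopen_set V"
  shows "\<exists>N. \<forall>n\<ge>N. \<forall>D\<in>cells n. D \<inter> V \<noteq> {} \<longrightarrow> D \<subseteq> V"
proof -
  have "compact V"
    using compact_Int_closed[OF compact_UNIV, of V] assms by (simp add: clopen_set_def)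
  moreover have "V \<subseteq> \<Union>{C. (\<exists>m. C \<in> cells m) \<and> C \<subseteq> V}"
    using open_cell_nbhd assms unfolding clopen_set_def by blast
  moreover have "\<And>C. C \<in> {C. (\<exists>m. C \<in> cells m) \<and> C \<subseteq> V} \<Longrightarrow> open C"
    using cells_clopen unfolding clopen_set_def by blast
  ultimately obtain \<C> where \<C>: "\<C> \<subseteq> {C. (\<exists>m. C \<in> cells m) \<and> C \<subseteq> V}" "finite \<C>" "V \<subseteq> \<Union>\<C>"
    by (rule compactE)
  define level where "level C = (SOME m. C \<in> cells m)" for C
  have level: "C \<in> cells (level C)" if C: "C \<in> \<C>" for C
  proof -
    obtain m where "C \<in> cells m" using C \<C>(1) by blast
    then show ?thesis unfolding level_def by (rule someI)
  qed
  show ?thesis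
  proof (intro exI[of _ "Max (level ` \<C>)"] allI impI ballI)
    fix n D assume n: "Max (level ` \<C>) \<le> n" and D: "D \<in> cells n" "D \<inter> V \<noteq> {}"
    then obtain x C where "x \<in> D" "C \<in> \<C>" "x \<in> C" using \<C>(3) by blast
    moreover have "level C \<le> n"
      using Max_ge[OF finite_imageI[OF \<C>(2)] imageI[OF \<open>C \<in> \<C>\<close>]] n by (rule le_trans)
    ultimately have "D \<subseteq> C" using cells_nested[OF _ D(1) level] by blast
    then show "D \<subseteq> V" using \<open>C \<in> \<C>\<close> \<C>(1) by blast
  qed
qed

lemma Union_P_saturated:
  assumes "y \<notin> V" "\<forall>D\<in>cells n. D \<inter> V \<noteq> {} \<longrightarrow> D \<subseteq> V"
  shows "\<Union>{D\<in>P n. D \<subseteq> V} = V"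
proof
  show "V \<subseteq> \<Union>{D\<in>P n. D \<subseteq> V}"
  proof
    fix x assume "x \<in> V"
    obtain D where D: "D \<in> cells n" "x \<in> D" using cells_cover by blast
    then have "D \<subseteq> V" using assms(2) \<open>x \<in> V\<close> by blast
    moreover have "D \<noteq> E n" using \<open>D \<subseteq> V\<close> assms(1) y_in_E[of n] by blast
    ultimately show "x \<in> \<Union>{D\<in>P n. D \<subseteq> V}" using D unfolding cells_def by blast
  qed
qed blast

end

section \<open>The subalgebras generated by the partitions\<close>

locale partitioned_crossed_product = nested_partitions y E P
  for y :: "'a::topological_space" and E P +
  fixes T :: "'a \<Rightarrow> 'a" and cj :: "'k::field \<Rightarrow> 'k"
  assumes continuous_T: "continuous_on UNIV T"
    and continuous_inv_T: "continuous_on UNIV (inv T)"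
    and surj_T: "surj T"
    and cj_0: "cj 0 = 0" and cj_1: "cj 1 = 1"
begin

lemma star_subalg_CP_T: "star_subalg T cj CP"
  by (rule star_subalg_CP[where T = T and cj = cj, OF continuous_T continuous_inv_T cj_0])

definition A :: "nat \<Rightarrow> (int \<Rightarrow> 'a \<Rightarrow> 'k) set" where
  "A n = gen_unital_star_subalg T cj {cp_mono 1 (chi Z) |Z. Z \<in> P n}"

lemma star_subalg_A: "star_subalg T cj (A n)"
proof -
  have "cp_one \<in> CP" unfolding cp_one_def by (rule cp_mono_in_CP[OF loc_const_const])
  moreover have "cp_mono 1 (chi Z) \<in> CP" if "Z \<in> P n" for Z
    by (rule cp_mono_in_CP[OF loc_const_chi[OF P_clopen[OF that]]])
  ultimately have "insert cp_one {cp_mono 1 (chi Z) |Z. Z \<in> P n} \<subseteq> CP" by blast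
  then show ?thesis
    unfolding A_def gen_unital_star_subalg_def
    by (rule star_subalg_gen_star_subalg[OF star_subalg_CP_T])
qed

lemma cp_one_in_A: "cp_one \<in> A n"
  and cp_mono_chi_P_in_A: "Z \<in> P n \<Longrightarrow> cp_mono 1 (chi Z) \<in> A n"
  unfolding A_def gen_unital_star_subalg_def
  by (auto intro!: subsetD[OF gen_star_subalg_superset])

lemma cp_mono_chi_Union_P_in_A:
  assumes "\<F> \<subseteq> P n" "i \<in> {0, 1}"
  shows "cp_mono i (chi (\<Union>\<F>)) \<in> A n"
proof (rule star_subalg_cp_mono_chi_Union[OF star_subalg_A])
  show "finite \<F>" using assms(1) P_finite finite_subset by blast
  show "disjoint \<F>" using assms(1) disjoint_P pairwise_subset by blast
  fix Z assume "Z \<in> \<F>"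
  then have "cp_mono 1 (chi Z) \<in> A n" using assms(1) cp_mono_chi_P_in_A by blast
  then show "cp_mono i (chi Z) \<in> A n"
    using assms(2) star_subalg_cp_mono_0_chi[OF star_subalg_A _ surj_T cj_0 cj_1] by blast
qed

lemma incseq_A: "incseq A"
proof (rule incseq_SucI)
  fix n
  have "cp_mono 1 (chi Z) \<in> A (Suc n)" if Z: "Z \<in> P n" for Z
  proof -
    have "Z \<in> cells n" using Z unfolding cells_def by blast
    then have "\<forall>D\<in>cells (Suc n). D \<inter> Z \<noteq> {} \<longrightarrow> D \<subseteq> Z"
      using cells_nested[OF le_SucI[OF order.refl]] by blast
    then have "\<Union>{D\<in>P (Suc n). D \<subseteq> Z} = Z" by (rule Union_P_saturated[OF y_notin_P[OF Z]])
    moreover have "cp_mono 1 (chi (\<Union>{D\<in>P (Suc n). D \<subseteq> Z})) \<in> A (Suc n)"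
      by (rule cp_mono_chi_Union_P_in_A) auto
    ultimately show ?thesis by simp
  qed
  then have "insert cp_one {cp_mono 1 (chi Z) |Z. Z \<in> P n} \<subseteq> A (Suc n)"
    using cp_one_in_A by blast
  then show "A n \<subseteq> A (Suc n)"
    unfolding A_def[of n] gen_unital_star_subalg_def by (rule gen_star_subalg_least[OF star_subalg_A])
qed

lemma star_subalg_A_infty: "star_subalg T cj (\<Union>n. A n)"
  by (rule star_subalg_UN_incseq[OF incseq_A star_subalg_A])

lemma cp_mono_chi_in_A_infty:
  assumes "clopen_set V" "y \<notin> V" "i \<in> {0, 1}"
  shows "cp_mono i (chi V) \<in> (\<Union>n. A n)"
proof -
  obtain N where "\<forall>D\<in>cells N. D \<inter> V \<noteq> {} \<longrightarrow> D \<subseteq> V"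
    using clopen_eventually_saturated[OF assms(1)] by blast
  then have "\<Union>{D\<in>P N. D \<subseteq> V} = V" by (rule Union_P_saturated[OF assms(2)])
  moreover have "cp_mono i (chi (\<Union>{D\<in>P N. D \<subseteq> V})) \<in> A N"
    by (rule cp_mono_chi_Union_P_in_A[OF _ assms(3)]) blast
  ultimately show ?thesis by auto
qed

lemma cp_mono_0_chi_in_A_infty:
  assumes "clopen_set V" shows "cp_mono 0 (chi V) \<in> (\<Union>n. A n)"
proof (cases "y \<in> V")
  case True
  have "clopen_set (- V)" using assms by (simp add: clopen_set_def open_Compl closed_Compl)
  then have compl: "cp_mono 0 (chi (- V)) \<in> (\<Union>n. A n)"
    using cp_mono_chi_in_A_infty[of "- V" 0] True by simp
  have one: "cp_one \<in> (\<Union>n. A n)" using cp_one_in_A by blast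
  have "(\<lambda>k x. cp_one k x + cp_smult (- 1) (cp_mono 0 (chi (- V))) k x) = cp_mono 0 (chi V)"
    unfolding cp_one_def cp_smult_cp_mono cp_mono_add by (auto simp: chi_def cp_mono_def fun_eq_iff)
  with star_subalgD(3)[OF star_subalg_A_infty one star_subalgD(4)[OF star_subalg_A_infty compl, of "- 1"]]
  show ?thesis by (rule back_subst[where P = "\<lambda>a. a \<in> (\<Union>n. A n)"])
next
  case False
  then show ?thesis using cp_mono_chi_in_A_infty[OF assms] by simp
qed

lemma cp_mono_0_loc_const_in_A_infty:
  assumes "loc_const f" shows "cp_mono 0 f \<in> (\<Union>n. A n)"
proof -
  have fin: "finite (range f)" by (rule loc_const_finite_range[OF compact_UNIV assms])
  have "cp_mono 0 (\<lambda>x. v * chi (f -` {v}) x) \<in> (\<Union>n. A n)" for v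
    using star_subalgD(4)[OF star_subalg_A_infty
        cp_mono_0_chi_in_A_infty[OF loc_const_clopen_fibre[OF assms]], of v]
    by (simp add: cp_smult_cp_mono)
  then show ?thesis
    by (subst sum_chi_fibres[OF fin]) (rule star_subalg_cp_mono_sum[OF star_subalg_A_infty fin])
qed

lemma cp_mono_1_CcK_in_A_infty:
  assumes "f \<in> CcK (UNIV - {y})" shows "cp_mono 1 f \<in> (\<Union>n. A n)"
proof -
  obtain n :: nat and c V where V: "\<forall>i<n. clopen_set (V i) \<and> V i \<subseteq> UNIV - {y}"
    and f: "f = (\<lambda>x. \<Sum>i<n. c i * chi (V i) x)" using assms unfolding CcK_def mem_Collect_eq by blast
  have "cp_mono 1 (\<lambda>x. c i * chi (V i) x) \<in> (\<Union>n. A n)" if "i \<in> {..<n}" for i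
  proof -
    have "cp_mono 1 (chi (V i)) \<in> (\<Union>n. A n)"
      using V that by (intro cp_mono_chi_in_A_infty) auto
    from star_subalgD(4)[OF star_subalg_A_infty this, of "c i"]
    show ?thesis by (simp add: cp_smult_cp_mono)
  qed
  then show ?thesis
    unfolding f by (rule star_subalg_cp_mono_sum[OF star_subalg_A_infty finite_lessThan])
qed

theorem A_infty_eq_gen:
  "(\<Union>n. A n) = gen_star_subalg T cj ({cp_mono 0 f |f. loc_const f} \<union> {cp_mono 1 f |f. f \<in> CcK (UNIV - {y})})"
  (is "_ = gen_star_subalg T cj ?G")
proof
  have "a \<in> (\<Union>n. A n)" if "a \<in> ?G" for a
    using that by (elim UnE CollectE exE conjE)
      (simp_all only: cp_mono_0_loc_const_in_A_infty cp_mono_1_CcK_in_A_infty)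
  then show "gen_star_subalg T cj ?G \<subseteq> (\<Union>n. A n)"
    by (intro gen_star_subalg_least[OF star_subalg_A_infty] subsetI)
next
  have "a \<in> CP" if "a \<in> ?G" for a
    using that by (elim UnE CollectE exE conjE) (simp_all add: cp_mono_in_CP loc_const_CcK)
  then have subalg: "star_subalg T cj (gen_star_subalg T cj ?G)"
    by (intro star_subalg_gen_star_subalg[OF star_subalg_CP_T] subsetI)
  have "A n \<subseteq> gen_star_subalg T cj ?G" for n
  proof -
    have "cp_one \<in> ?G" unfolding cp_one_def by (rule UnI1) (blast intro: loc_const_const)
    moreover have "cp_mono 1 (chi Z) \<in> ?G" if "Z \<in> P n" for Z
    proof -
      have "chi Z \<in> CcK (UNIV - {y})"
        using P_clopen[OF that] y_notin_P[OF that] by (intro chi_in_CcK) auto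
      then show ?thesis by (intro UnI2) blast
    qed
    ultimately have "insert cp_one {cp_mono 1 (chi Z) |Z. Z \<in> P n} \<subseteq> ?G" by blast
    then have "insert cp_one {cp_mono 1 (chi Z) |Z. Z \<in> P n} \<subseteq> gen_star_subalg T cj ?G"
      using gen_star_subalg_superset by (rule subset_trans)
    then show ?thesis
      unfolding A_def gen_unital_star_subalg_def by (rule gen_star_subalg_least[OF subalg])
  qed
  then show "(\<Union>n. A n) \<subseteq> gen_star_subalg T cj ?G" by blast
qed

end

theorem lemma4p3:
  fixes T :: "'a::metric_space \<Rightarrow> 'a"
    and cj :: "'k::field \<Rightarrow> 'k"
    and y :: 'a
    and E :: "nat \<Rightarrow> 'a set"
    and P :: "nat \<Rightarrow> 'a set set"
  assumes X_infinite: "infinite (UNIV :: 'a set)"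
    and X_compact: "compact (UNIV :: 'a set)"
    and X_tdisc: "totally_disconnected_space TYPE('a)"
    and T_homeo: "\<exists>S. homeomorphism UNIV UNIV T S"
    and cj_add: "\<And>a b. cj (a + b) = cj a + cj b"
    and cj_mult: "\<And>a b. cj (a * b) = cj a * cj b"
    and cj_invol: "\<And>a. cj (cj a) = a"
    and E_clopen: "\<And>n. clopen_set (E n)"
    and E_decr: "\<And>n. E (Suc n) \<subseteq> E n"
    and E_inter: "(\<Inter>n. E n) = {y}"
    and P_finite: "\<And>n. finite (P n)"
    and P_clopen: "\<And>n Z. Z \<in> P n \<Longrightarrow> clopen_set Z"
    and P_nonempty: "\<And>n Z. Z \<in> P n \<Longrightarrow> Z \<noteq> {}"
    and P_disjoint: "\<And>n Z W. Z \<in> P n \<Longrightarrow> W \<in> P n \<Longrightarrow> Z \<noteq> W \<Longrightarrow> Z \<inter> W = {}"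
    and P_union: "\<And>n. \<Union>(P n) = UNIV - E n"
    and P_refine: "\<And>n Z. Z \<in> insert (E (Suc n)) (P (Suc n)) \<Longrightarrow>
                     \<exists>W \<in> insert (E n) (P n). Z \<subseteq> W"
    and P_generates: "\<And>U. open U \<longleftrightarrow> generate_topology (\<Union>n. insert (E n) (P n)) U"
  shows "(\<Union>n. gen_unital_star_subalg T cj {cp_mono 1 (chi Z) | Z. Z \<in> P n})
       = gen_star_subalg T cj
           ({cp_mono 0 f | f. loc_const f} \<union> {cp_mono 1 f | f. f \<in> CcK (UNIV - {y})})"
proof -
  obtain S where homeo: "homeomorphism UNIV UNIV T S" using T_homeo by blast
  then have "inv T = S" by (intro inv_equality) (auto simp: homeomorphism_def)
  then have T: "continuous_on UNIV T" "continuous_on UNIV (inv T)" "surj T"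
    using homeo by (auto simp: homeomorphism_def)
  have "cj 0 = 0" using cj_add[of 0 0] by (metis add_cancel_right_right add_0)
  moreover have "cj 1 = 1" using cj_mult[of 1 "cj 1"] cj_invol[of 1] by simp
  moreover have "\<And>n. y \<in> E n" using E_inter by blast
  ultimately interpret partitioned_crossed_product y E P T cj
    using X_compact E_clopen P_finite P_clopen P_disjoint P_union P_refine P_generates T
    by unfold_locales
  show ?thesis using A_infty_eq_gen unfolding A_def .
qed

end
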